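(* Let $p>1$ and let $A$ be a complex $r$-matrix of order $n_1\times\cdots\times n_r$. Then for every $k\in[r]$, \[ \|A\|_p\geq\left(\frac{n_k^{1/(p-1)}}{(n_1\cdots n_r)^{1/(p-1)}}\sum_{j\in[n_k]}\big|\Sigma A^{(k)}_j\big|^{p/(p-1)}\right)^{(p-1)/p}. \]
   Context: An $r$-matrix of order $n_1\times\cdots\times n_r$ is a function on $[n_1]\times\cdots\times[n_r]$ with values $a_{i_1,\ldots,i_r}$. For $k\in[r]$, $j\in[n_k]$, the slice $A^{(k)}_j$ is the $(r-1)$-matrix obtained by fixing $i_k=j$, and $\Sigma A^{(k)}_j$ is the sum of its entries. The spectral $p$-norm is $\|A\|_p=\max\{|\sum a_{i_1,\ldots,i_r}\overline{x^{(1)}_{i_1}}\cdots\overline{x^{(r)}_{i_r}}|:\mathbf{x}^{(k)}\in\mathbb{C}^{n_k},\ |\mathbf{x}^{(k)}|_p=1\ \forall k\}$. *)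

theory Defs
  imports "HOL-Analysis.Analysis"
begin

text \<open>Indices are 0-based: an r-matrix of order n_0 x ... x n_(r-1) is a function on
  the index set (PiE {0..<r} (\<lambda>k. {0..<n k})), i.e. tuples i with i k < n k for k < r
  and i k = undefined otherwise.\<close>

definition index_set :: "nat \<Rightarrow> (nat \<Rightarrow> nat) \<Rightarrow> (nat \<Rightarrow> nat) set" where
  "index_set r n = PiE {0..<r} (\<lambda>k. {0..<n k})"

definition lp_norm :: "real \<Rightarrow> nat \<Rightarrow> (nat \<Rightarrow> complex) \<Rightarrow> real" where
  "lp_norm p m x = (\<Sum>i<m. cmod (x i) powr p) powr (1 / p)"

definition mform :: "nat \<Rightarrow> (nat \<Rightarrow> nat) \<Rightarrow> ((nat \<Rightarrow> nat) \<Rightarrow> complex)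
    \<Rightarrow> (nat \<Rightarrow> nat \<Rightarrow> complex) \<Rightarrow> complex" where
  "mform r n A x = (\<Sum>i\<in>index_set r n. A i * (\<Prod>k<r. cnj (x k (i k))))"

text \<open>Spectral p-norm (the maximum is attained by compactness; we take the supremum).\<close>
definition spectral_norm :: "real \<Rightarrow> nat \<Rightarrow> (nat \<Rightarrow> nat) \<Rightarrow> ((nat \<Rightarrow> nat) \<Rightarrow> complex) \<Rightarrow> real" where
  "spectral_norm p r n A = Sup {cmod (mform r n A x) | x.
      \<forall>k<r. lp_norm p (n k) (x k) = 1}"

definition slice_sum :: "nat \<Rightarrow> (nat \<Rightarrow> nat) \<Rightarrow> ((nat \<Rightarrow> nat) \<Rightarrow> complex) \<Rightarrow> nat \<Rightarrow> nat \<Rightarrow> complex" where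
  "slice_sum r n A k j = (\<Sum>i\<in>{i\<in>index_set r n. i k = j}. A i)"

end

theory Submission
  imports Defs
begin

text \<open>Evaluate the multilinear form at a single test tuple: the constant unit vectors
  with entries n_l^(-1/p) in every coordinate l \<noteq> k, and in coordinate k the
  Hoelder-dual unit vector of the slice sums. The form then collapses to
  (\<Prod>l\<noteq>k n_l)^(-1/p) times the l^q norm of the slice sums, q = p/(p-1), which
  is exactly the right-hand side.\<close>

lemma norm_le_one_if_lp_norm_eq_one:
  assumes "p > 0" and "lp_norm p m v = 1" and "j < m"
  shows "cmod (v j) \<le> 1"
proof -
  let ?s = "\<Sum>i<m. cmod (v i) powr p"
  have "?s = (?s powr (1/p)) powr p" using assms(1) by (simp add: powr_powr sum_nonneg)
  hence "?s = 1" using assms(2) by (simp add: lp_norm_def)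
  moreover have "cmod (v j) powr p \<le> ?s"
    by (rule member_le_sum) (use assms(3) in auto)
  ultimately show ?thesis
    using assms(1) powr_less_mono2[of p 1 "cmod (v j)"] by fastforce
qed

lemma mform_le_spectral_norm:
  assumes "p > 0" and unit: "\<forall>l<r. lp_norm p (n l) (x l) = 1"
  shows "cmod (mform r n A x) \<le> spectral_norm p r n A"
proof -
  let ?M = "{cmod (mform r n A x) | x. \<forall>k<r. lp_norm p (n k) (x k) = 1}"
  have "t \<le> (\<Sum>i\<in>index_set r n. cmod (A i))" if "t \<in> ?M" for t
  proof -
    from that obtain x where t: "t = cmod (mform r n A x)"
      and hx: "\<forall>k<r. lp_norm p (n k) (x k) = 1" by blast
    have "t \<le> (\<Sum>i\<in>index_set r n. cmod (A i) * (\<Prod>l<r. cmod (x l (i l))))"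
      unfolding t mform_def by (rule order_trans[OF norm_sum]) (simp add: norm_mult flip: prod_norm)
    also have "\<dots> \<le> (\<Sum>i\<in>index_set r n. cmod (A i))"
    proof (rule sum_mono)
      fix i assume i: "i \<in> index_set r n"
      have "(\<Prod>l<r. cmod (x l (i l))) \<le> 1"
      proof (rule prod_le_1)
        fix l assume l: "l \<in> {..<r}"
        hence "i l < n l" using i by (auto simp: index_set_def PiE_def Pi_def)
        thus "0 \<le> cmod (x l (i l)) \<and> cmod (x l (i l)) \<le> 1"
          using norm_le_one_if_lp_norm_eq_one[OF assms(1)] hx l by auto
      qed
      thus "cmod (A i) * (\<Prod>l<r. cmod (x l (i l))) \<le> cmod (A i)"
        by (simp add: mult_left_le)
    qed
    finally show ?thesis .
  qed
  hence "bdd_above ?M" by (rule bdd_aboveI)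
  moreover have "cmod (mform r n A x) \<in> ?M" using unit by blast
  ultimately show ?thesis unfolding spectral_norm_def by (simp add: cSup_upper)
qed

lemma lp_norm_const_unit:
  assumes "p > 0" and "m > 0"
  shows "lp_norm p m (\<lambda>_. complex_of_real (real m powr (-1/p))) = 1"
proof -
  have "(real m powr (-1/p)) powr p = inverse (real m)"
    by (subst powr_powr) (use assms in \<open>simp add: powr_minus\<close>)
  hence "(\<Sum>i<m. cmod (complex_of_real (real m powr (-1/p))) powr p) = 1"
    using assms(2) by simp
  thus ?thesis by (simp add: lp_norm_def)
qed

lemma finite_index_set: "finite (index_set r n)"
  by (simp add: index_set_def finite_PiE)

lemma mform_const_except:
  assumes "k < r" and const: "\<And>l. l < r \<Longrightarrow> l \<noteq> k \<Longrightarrow> x l = (\<lambda>_. c l)"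
  shows "mform r n A x
    = (\<Prod>l\<in>{..<r}-{k}. cnj (c l)) * (\<Sum>j<n k. cnj (x k j) * slice_sum r n A k j)"
proof -
  let ?C = "\<Prod>l\<in>{..<r}-{k}. cnj (c l)"
  have "(\<Prod>l<r. cnj (x l (i l))) = cnj (x k (i k)) * ?C" for i
  proof -
    have "(\<Prod>l<r. cnj (x l (i l))) = cnj (x k (i k)) * (\<Prod>l\<in>{..<r}-{k}. cnj (x l (i l)))"
      using assms(1) by (simp add: prod.remove)
    also have "(\<Prod>l\<in>{..<r}-{k}. cnj (x l (i l))) = ?C"
      by (rule prod.cong) (auto simp: const)
    finally show ?thesis .
  qed
  hence "mform r n A x = ?C * (\<Sum>i\<in>index_set r n. cnj (x k (i k)) * A i)"
    by (simp add: mform_def sum_distrib_left mult_ac)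
  also have "(\<Sum>i\<in>index_set r n. cnj (x k (i k)) * A i)
      = (\<Sum>j<n k. \<Sum>i\<in>{i\<in>index_set r n. i k = j}. cnj (x k (i k)) * A i)"
    by (rule sum.group[symmetric])
      (use assms(1) in \<open>auto simp: finite_index_set, auto simp: index_set_def\<close>)
  also have "\<dots> = (\<Sum>j<n k. cnj (x k j) * slice_sum r n A k j)"
    by (simp add: slice_sum_def sum_distrib_left)
  finally show ?thesis .
qed

text \<open>The vector attaining equality in Hoelder's inequality for the pairing with S,
  normalised in l^p; q - 1 = 1/(p-1) for the dual exponent q = p/(p-1).\<close>

definition lp_dual :: "real \<Rightarrow> nat \<Rightarrow> (nat \<Rightarrow> complex) \<Rightarrow> nat \<Rightarrow> complex" where
  "lp_dual p m S j = sgn (S j) * complex_of_real (cmod (S j) powr (1 / (p - 1))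
     / (\<Sum>i<m. cmod (S i) powr (p / (p - 1))) powr (1 / p))"

lemma lp_norm_lp_dual:
  assumes "p > 1" and pos: "(\<Sum>i<m. cmod (S i) powr (p / (p - 1))) > 0"
  shows "lp_norm p m (lp_dual p m S) = 1"
proof -
  define \<Sigma> where "\<Sigma> = (\<Sum>i<m. cmod (S i) powr (p / (p - 1)))"
  have "cmod (lp_dual p m S j) powr p = cmod (S j) powr (p / (p - 1)) / \<Sigma>" for j
  proof (cases "S j = 0")
    case False
    have "cmod (lp_dual p m S j) = cmod (S j) powr (1 / (p - 1)) / \<Sigma> powr (1 / p)"
      using False by (simp add: lp_dual_def \<Sigma>_def norm_mult norm_divide norm_sgn)
    thus ?thesis
      using assms pos by (simp add: \<Sigma>_def powr_divide powr_powr)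
  qed (simp add: lp_dual_def)
  hence "(\<Sum>j<m. cmod (lp_dual p m S j) powr p) = 1"
    using pos by (simp add: sum_divide_distrib[symmetric] \<Sigma>_def)
  thus ?thesis by (simp add: lp_norm_def)
qed

lemma lp_dual_pairing:
  assumes "p > 1"
  shows "(\<Sum>j<m. cnj (lp_dual p m S j) * S j)
    = complex_of_real ((\<Sum>j<m. cmod (S j) powr (p / (p - 1))) powr ((p - 1) / p))"
proof -
  define \<Sigma> where "\<Sigma> = (\<Sum>i<m. cmod (S i) powr (p / (p - 1)))"
  have "cnj (lp_dual p m S j) * S j
      = complex_of_real (cmod (S j) powr (p / (p - 1)) / \<Sigma> powr (1 / p))" for j
  proof (cases "S j = 0")
    case False
    have "p / (p - 1) = 1 + 1 / (p - 1)" using assms by (simp add: field_simps)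
    hence power: "cmod (S j) * cmod (S j) powr (1 / (p - 1)) = cmod (S j) powr (p / (p - 1))"
      using False by (simp add: powr_add)
    have phase: "cnj (sgn (S j)) * S j = complex_of_real (cmod (S j))"
      using False complex_norm_square[of "S j"]
      by (simp add: sgn_div_norm scaleR_conv_of_real power2_eq_square field_simps)
    have "cnj (lp_dual p m S j) * S j = (cnj (sgn (S j)) * S j)
        * complex_of_real (cmod (S j) powr (1 / (p - 1)) / \<Sigma> powr (1 / p))"
      by (simp add: lp_dual_def \<Sigma>_def)
    also have "\<dots> = complex_of_real (cmod (S j) * cmod (S j) powr (1 / (p - 1)) / \<Sigma> powr (1 / p))"
      by (simp add: phase)
    finally show ?thesis using power by simp
  qed (use assms in \<open>simp add: lp_dual_def\<close>)
  hence "(\<Sum>j<m. cnj (lp_dual p m S j) * S j) = complex_of_real (\<Sigma> / \<Sigma> powr (1 / p))"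
    by (simp add: \<Sigma>_def sum_divide_distrib)
  also have "\<Sigma> / \<Sigma> powr (1 / p) = \<Sigma> powr ((p - 1) / p)"
  proof -
    have "(p - 1) / p = 1 - 1 / p" using assms by (simp add: field_simps)
    thus ?thesis by (simp add: powr_diff \<Sigma>_def sum_nonneg)
  qed
  finally show ?thesis by (simp add: \<Sigma>_def)
qed

lemma exists_lp_unit_norming_vector:
  assumes "p > 1" and "m > 0"
  obtains y where "lp_norm p m y = 1"
    and "(\<Sum>j<m. cnj (y j) * S j)
      = complex_of_real ((\<Sum>j<m. cmod (S j) powr (p / (p - 1))) powr ((p - 1) / p))"
proof (cases "(\<Sum>j<m. cmod (S j) powr (p / (p - 1))) > 0")
  case True
  with assms that show ?thesis by (metis lp_norm_lp_dual lp_dual_pairing)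
next
  case False
  hence zero: "(\<Sum>j<m. cmod (S j) powr (p / (p - 1))) = 0"
    by (simp add: not_less order.antisym sum_nonneg)
  hence "\<forall>j<m. S j = 0"
    by (subst (asm) sum_nonneg_eq_0_iff) auto
  with zero show ?thesis
    using that lp_norm_const_unit[of p m] assms by simp
qed

theorem theorem23:
  fixes p :: real and r :: nat and n :: "nat \<Rightarrow> nat"
    and A :: "(nat \<Rightarrow> nat) \<Rightarrow> complex" and k :: nat
  assumes "p > 1"
    and "\<forall>l<r. n l > 0"
    and "k < r"
  shows "spectral_norm p r n A \<ge>
    ((real (n k) powr (1 / (p - 1)) / real (\<Prod>l<r. n l) powr (1 / (p - 1)))
       * (\<Sum>j<n k. cmod (slice_sum r n A k j) powr (p / (p - 1)))) powr ((p - 1) / p)"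
proof -
  define \<Sigma> where "\<Sigma> = (\<Sum>j<n k. cmod (slice_sum r n A k j) powr (p / (p - 1)))"
  define c where "c l = complex_of_real (real (n l) powr (-1/p))" for l
  define N where "N = (\<Prod>l\<in>{..<r}-{k}. real (n l))"
  have N: "N > 0" using assms(2) by (auto simp: N_def intro: prod_pos)
  obtain y where y: "lp_norm p (n k) y = 1"
    and pairing: "(\<Sum>j<n k. cnj (y j) * slice_sum r n A k j) = complex_of_real (\<Sigma> powr ((p - 1) / p))"
    using exists_lp_unit_norming_vector[of p "n k"] assms \<Sigma>_def by blast
  define x where "x l = (if l = k then y else (\<lambda>_. c l))" for l
  have "\<forall>l<r. lp_norm p (n l) (x l) = 1"
    using y lp_norm_const_unit[of p] assms by (simp add: x_def c_def)
  hence "cmod (mform r n A x) \<le> spectral_norm p r n A"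
    using assms(1) by (intro mform_le_spectral_norm) auto
  moreover have "mform r n A x = complex_of_real (N powr (-1/p) * \<Sigma> powr ((p - 1) / p))"
    using mform_const_except[of k r x c n A] assms(3) pairing
    by (simp add: x_def c_def N_def prod_powr_distrib)
  moreover have "((real (n k) powr (1 / (p - 1)) / real (\<Prod>l<r. n l) powr (1 / (p - 1))) * \<Sigma>)
      powr ((p - 1) / p) = N powr (-1/p) * \<Sigma> powr ((p - 1) / p)"
  proof -
    have "real (n k) powr (1 / (p - 1)) / real (\<Prod>l<r. n l) powr (1 / (p - 1))
        = N powr (- 1 / (p - 1))"
      using assms N by (simp add: N_def prod.remove powr_mult powr_minus divide_inverse)
    moreover have "(N powr (- 1 / (p - 1))) powr ((p - 1) / p) = N powr (-1/p)"
      using assms(1) by (simp add: powr_powr)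
    ultimately show ?thesis
      using N by (simp add: powr_mult \<Sigma>_def sum_nonneg)
  qed
  ultimately show ?thesis by (simp add: \<Sigma>_def norm_mult)
qed

end
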